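(* Let $K=\mathbb{Q}(\sqrt m)$ be a Deng–Li field with fundamental unit $\varepsilon$. Then: (i) The ideals $\mathfrak p^{a_0}\prod_{i=1}^n\mathfrak l_i^{a_i}$ ($a_i\in\{0,1\}$) which are principal are exactly: - $(1)$; - $\prod_{i=1}^n\mathfrak l_i=(\sqrt m)$; - $\mathfrak p\,\mathfrak l_2$; - $\mathfrak p\,\mathfrak l_1\prod_{j=3}^n\mathfrak l_j$. In particular every non-trivial relation involves $\mathfrak p$ (i.e. $a_0=1$). (ii) The ideals $(\varepsilon+1)$ and $(\varepsilon-1)$ are, up to rational factors, the two ideals $\mathfrak p\mathfrak l_2$ and $\mathfrak p\mathfrak l_1\prod_{j\ge3}\mathfrak l_j$. Moreover $\frac{\varepsilon+1}{\varepsilon-1}=C\sqrt m$ for a rational number $C$ with odd numerator and denominator. (iii) There exist a sign $s_0\in\{\pm1\}$ and $c\in\mathbb{Q}^\times$ such that $(\varepsilon+s_0)=(c)\,\mathfrak p\,\mathfrak l_2$.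
   Context: A Deng–Li field is $K=\mathbb{Q}(\sqrt m)$, $m=\ell_1\ell_2\cdots\ell_n$ with $n\ge 2$ even and $\ell_1,\dots,\ell_n$ distinct primes such that: - $\ell_1\equiv3\pmod8$; - $\ell_i\equiv5\pmod8$ for $i\ge2$; - $\big(\frac{\ell_1}{\ell_2}\big)=-1$, and $\big(\frac{\ell_1}{\ell_j}\big)=1$ for $j\ge3$; - $\big(\frac{\ell_i}{\ell_j}\big)=-1$ for $2\le i<j\le n$ (Legendre symbols). $\mathfrak p$ denotes the prime ideal of $K$ above $2$ and $\mathfrak l_i$ the prime ideal above $\ell_i$; all are ramified. The fundamental unit $\varepsilon>1$ has norm $+1$. *)

theory Defs
  imports Complex_Main "HOL-Number_Theory.Number_Theory"
begin

text \<open>Elements of Z[sqrt m] are represented as pairs (a,b) standing for a + b sqrt m.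
For a Deng--Li field m = 3 (mod 4) (indeed m = 7 mod 8), so Z[sqrt m] is the full ring of
integers O_K of K = Q(sqrt m).\<close>

definition zadd :: "int \<times> int \<Rightarrow> int \<times> int \<Rightarrow> int \<times> int" where
  "zadd x y = (fst x + fst y, snd x + snd y)"

definition zmul :: "int \<Rightarrow> int \<times> int \<Rightarrow> int \<times> int \<Rightarrow> int \<times> int" where
  "zmul m x y = (fst x * fst y + m * snd x * snd y, fst x * snd y + snd x * fst y)"

inductive_set ideal_gen :: "int \<Rightarrow> (int \<times> int) set \<Rightarrow> (int \<times> int) set"
  for m :: int and S :: "(int \<times> int) set" where
  zero: "(0, 0) \<in> ideal_gen m S"
| gen: "s \<in> S \<Longrightarrow> zmul m r s \<in> ideal_gen m S"
| add: "x \<in> ideal_gen m S \<Longrightarrow> y \<in> ideal_gen m S \<Longrightarrow> zadd x y \<in> ideal_gen m S"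

definition pideal :: "int \<Rightarrow> int \<times> int \<Rightarrow> (int \<times> int) set" where
  "pideal m \<alpha> = ideal_gen m {\<alpha>}"

definition is_principal :: "int \<Rightarrow> (int \<times> int) set \<Rightarrow> bool" where
  "is_principal m I \<longleftrightarrow> (\<exists>\<alpha>. I = pideal m \<alpha>)"

definition ideal_prod :: "int \<Rightarrow> (int \<times> int) set \<Rightarrow> (int \<times> int) set \<Rightarrow> (int \<times> int) set" where
  "ideal_prod m I J = ideal_gen m {zmul m x y | x y. x \<in> I \<and> y \<in> J}"

fun ideal_prod_list :: "int \<Rightarrow> (int \<times> int) set list \<Rightarrow> (int \<times> int) set" where
  "ideal_prod_list m [] = pideal m (1, 0)"
| "ideal_prod_list m (I # Is) = ideal_prod m I (ideal_prod_list m Is)"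

text \<open>The prime ideal above 2 (p = (2, 1 + sqrt m)) and above the prime l (l = (l, sqrt m)),
both ramified.\<close>
definition prime2 :: "int \<Rightarrow> (int \<times> int) set" where
  "prime2 m = ideal_gen m {(2, 0), (1, 1)}"

definition primeL :: "int \<Rightarrow> int \<Rightarrow> (int \<times> int) set" where
  "primeL m q = ideal_gen m {(q, 0), (0, 1)}"

definition ram_ideal :: "int \<Rightarrow> (nat \<Rightarrow> int) \<Rightarrow> nat \<Rightarrow> bool \<Rightarrow> nat set \<Rightarrow> (int \<times> int) set" where
  "ram_ideal m l n a0 A =
     ideal_prod m (if a0 then prime2 m else pideal m (1, 0))
       (ideal_prod_list m (map (\<lambda>i. primeL m (l i)) (filter (\<lambda>i. i \<in> A) [1..<n+1])))"

definition zunit :: "int \<Rightarrow> int \<Rightarrow> int \<Rightarrow> bool" where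
  "zunit m x y \<longleftrightarrow> x^2 - m * y^2 = 1 \<or> x^2 - m * y^2 = -1"

definition fund_unit :: "int \<Rightarrow> int \<Rightarrow> int \<Rightarrow> bool" where
  "fund_unit m x y \<longleftrightarrow> zunit m x y \<and> x + y * sqrt (real_of_int m) > 1 \<and>
     (\<forall>u v. zunit m u v \<and> u + v * sqrt (real_of_int m) > 1 \<longrightarrow>
            x + y * sqrt (real_of_int m) \<le> u + v * sqrt (real_of_int m))"

definition deng_li :: "nat \<Rightarrow> (nat \<Rightarrow> int) \<Rightarrow> int \<Rightarrow> bool" where
  "deng_li n l m \<longleftrightarrow>
     n \<ge> 2 \<and> even n \<and>
     (\<forall>i\<in>{1..n}. prime (l i)) \<and> inj_on l {1..n} \<and>
     m = (\<Prod>i\<in>{1..n}. l i) \<and>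
     [l 1 = 3] (mod 8) \<and>
     (\<forall>i\<in>{2..n}. [l i = 5] (mod 8)) \<and>
     Legendre (l 1) (l 2) = -1 \<and>
     (\<forall>j\<in>{3..n}. Legendre (l 1) (l j) = 1) \<and>
     (\<forall>i j. 2 \<le> i \<and> i < j \<and> j \<le> n \<longrightarrow> Legendre (l i) (l j) = -1)"

end

theory Submission
  imports Defs "HOL-Computational_Algebra.Nth_Powers"
begin

text \<open>Write \<open>a\<^sub>D\<close> for the product of the ramified primes above the prime factors of
  \<open>D | m\<close>, possibly times the prime \<open>p\<close> above 2. With \<open>D E = m\<close>, a generator of \<open>a\<^sub>D\<close> has
  norm \<open>\<plusminus>D\<close> (resp. \<open>\<plusminus>2D\<close>), so \<open>a\<^sub>D\<close> is principal iff \<open>D U\<^sup>2 - E V\<^sup>2 = \<plusminus>1\<close>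
  (resp. \<open>\<plusminus>2\<close>) is solvable. Reducing such an equation modulo each \<open>l\<^sub>j\<close>, \<open>j \<ge> 2\<close>, and
  evaluating the Legendre symbols by the Deng--Li conditions forces \<open>|A| \<equiv> a\<^sub>0 (mod 2)\<close> and
  puts \<open>l\<^sub>1\<close> on the same side as every \<open>l\<^sub>j\<close>, \<open>j \<ge> 3\<close>; only the four listed ideals survive.
  Conversely \<open>(1)\<close> and \<open>(\<surd>m)\<close> are principal, and the fundamental unit \<open>\<epsilon> = x + y\<surd>m\<close>
  provides the other two: \<open>N \<epsilon> = 1\<close> because \<open>-1\<close> is not a square mod \<open>l\<^sub>1\<close>, so
  \<open>(x + 1)(x - 1) = m y\<^sup>2\<close> splits as \<open>x + 1 = D r\<^sup>2\<close>, \<open>x - 1 = E s\<^sup>2\<close>. Here \<open>x\<close> is even,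
  since otherwise \<open>\<epsilon>\<close> would be the square of a smaller unit, hence \<open>D r\<^sup>2 - E s\<^sup>2 = 2\<close>. This
  exhibits generators of \<open>p a\<^sub>D\<close> and \<open>p a\<^sub>E\<close>, and gives \<open>(\<epsilon> + 1)/(\<epsilon> - 1) = r\<surd>m/(s E)\<close>.\<close>

section \<open>Arithmetic and ideals of \<open>\<int>[\<surd>m]\<close>\<close>

lemma zmul_assoc: "zmul m a (zmul m b c) = zmul m (zmul m a b) c"
  by (simp add: zmul_def algebra_simps)

lemma zmul_zadd_right: "zmul m a (zadd b c) = zadd (zmul m a b) (zmul m a c)"
  by (simp add: zmul_def zadd_def algebra_simps)

lemma zmul_zadd_left: "zmul m (zadd a b) c = zadd (zmul m a c) (zmul m b c)"
  by (simp add: zmul_def zadd_def algebra_simps)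

lemma zmul_one_left [simp]: "zmul m (1, 0) a = a"
  by (simp add: zmul_def)

definition zideal :: "int \<Rightarrow> (int \<times> int) set \<Rightarrow> bool" where
  "zideal m I \<longleftrightarrow> (0, 0) \<in> I \<and> (\<forall>a\<in>I. \<forall>b\<in>I. zadd a b \<in> I) \<and> (\<forall>r. \<forall>a\<in>I. zmul m r a \<in> I)"

lemma zidealD:
  assumes "zideal m I"
  shows zideal_zadd: "a \<in> I \<Longrightarrow> b \<in> I \<Longrightarrow> zadd a b \<in> I"
    and zideal_zmul: "a \<in> I \<Longrightarrow> zmul m r a \<in> I"
  using assms unfolding zideal_def by blast+

lemma zideal_lincomb:
  "zideal m I \<Longrightarrow> a \<in> I \<Longrightarrow> b \<in> I \<Longrightarrow> zadd (zmul m r a) (zmul m t b) \<in> I"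
  by (intro zideal_zadd zideal_zmul)

lemma ideal_gen_zmul: "a \<in> ideal_gen m S \<Longrightarrow> zmul m r a \<in> ideal_gen m S"
proof (induction a arbitrary: r rule: ideal_gen.induct)
  case zero
  then show ?case using ideal_gen.zero by (simp add: zmul_def)
next
  case (gen s r')
  then show ?case by (simp add: zmul_assoc ideal_gen.gen)
next
  case (add a b)
  then show ?case by (simp add: zmul_zadd_right ideal_gen.add)
qed

lemma zideal_ideal_gen: "zideal m (ideal_gen m S)"
  unfolding zideal_def using ideal_gen.zero ideal_gen.add ideal_gen_zmul by blast

lemma ideal_gen_generator: "s \<in> S \<Longrightarrow> s \<in> ideal_gen m S"
  using ideal_gen.gen[of s S m "(1, 0)"] by simp

lemma ideal_gen_least:
  assumes "zideal m I" "S \<subseteq> I"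
  shows "ideal_gen m S \<subseteq> I"
proof
  fix a assume "a \<in> ideal_gen m S"
  then show "a \<in> I"
    by (induction a rule: ideal_gen.induct) (use assms in \<open>auto simp: zideal_def\<close>)
qed

lemma ideal_gen_eqI:
  assumes "zideal m I" "S \<subseteq> I" "\<And>a. a \<in> I \<Longrightarrow> a \<in> ideal_gen m S"
  shows "ideal_gen m S = I"
  using ideal_gen_least[OF assms(1,2)] assms(3) by blast

lemma pideal_eq_range: "pideal m \<alpha> = range (\<lambda>r. zmul m r \<alpha>)"
proof (unfold pideal_def, rule ideal_gen_eqI)
  have "(0, 0) = zmul m (0, 0) \<alpha>" by (simp add: zmul_def)
  then show "zideal m (range (\<lambda>r. zmul m r \<alpha>))"
    unfolding zideal_def by (auto simp: zmul_assoc zmul_zadd_left[symmetric])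
  show "{\<alpha>} \<subseteq> range (\<lambda>r. zmul m r \<alpha>)"
    by (auto intro: range_eqI[of _ _ "(1, 0)"])
qed (auto intro: ideal_gen.gen)

lemma pideal_generator: "\<alpha> \<in> pideal m \<alpha>"
  unfolding pideal_eq_range by (rule range_eqI[of _ _ "(1, 0)"]) simp

lemma zideal_pideal: "zideal m (pideal m \<alpha>)"
  unfolding pideal_def by (rule zideal_ideal_gen)

lemma pideal_one: "pideal m (1, 0) = UNIV"
  unfolding pideal_eq_range by (auto intro: range_eqI[of _ _ x for x] simp: zmul_def)

lemma ideal_prod_least:
  "zideal m K \<Longrightarrow> (\<And>a b. a \<in> I \<Longrightarrow> b \<in> J \<Longrightarrow> zmul m a b \<in> K) \<Longrightarrow> ideal_prod m I J \<subseteq> K"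
  unfolding ideal_prod_def by (rule ideal_gen_least) auto

lemma ideal_prod_mem: "a \<in> I \<Longrightarrow> b \<in> J \<Longrightarrow> zmul m a b \<in> ideal_prod m I J"
  unfolding ideal_prod_def by (rule ideal_gen_generator) blast

lemma zideal_ideal_prod: "zideal m (ideal_prod m I J)"
  unfolding ideal_prod_def by (rule zideal_ideal_gen)

lemma ideal_prod_UNIV_left:
  assumes "zideal m J"
  shows "ideal_prod m UNIV J = J"
proof
  show "ideal_prod m UNIV J \<subseteq> J"
    by (rule ideal_prod_least[OF assms]) (use zideal_zmul[OF assms] in auto)
  show "J \<subseteq> ideal_prod m UNIV J"
    using ideal_prod_mem[of "(1, 0)" UNIV] by fastforce
qed

lemma pideal_zmul: "pideal m (zmul m \<alpha> \<beta>) = ideal_prod m (pideal m \<alpha>) (pideal m \<beta>)"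
proof
  show "pideal m (zmul m \<alpha> \<beta>) \<subseteq> ideal_prod m (pideal m \<alpha>) (pideal m \<beta>)"
  proof
    fix a assume "a \<in> pideal m (zmul m \<alpha> \<beta>)"
    then obtain r where "a = zmul m (zmul m r \<alpha>) \<beta>" by (auto simp: pideal_eq_range zmul_assoc)
    moreover have "zmul m r \<alpha> \<in> pideal m \<alpha>" by (simp add: pideal_eq_range)
    ultimately show "a \<in> ideal_prod m (pideal m \<alpha>) (pideal m \<beta>)"
      by (simp add: ideal_prod_mem pideal_generator)
  qed
  show "ideal_prod m (pideal m \<alpha>) (pideal m \<beta>) \<subseteq> pideal m (zmul m \<alpha> \<beta>)"
  proof (rule ideal_prod_least[OF zideal_pideal])
    fix a b assume "a \<in> pideal m \<alpha>" "b \<in> pideal m \<beta>"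
    then obtain r t where "a = zmul m r \<alpha>" "b = zmul m t \<beta>" by (auto simp: pideal_eq_range)
    then have "zmul m a b = zmul m (zmul m r t) (zmul m \<alpha> \<beta>)" by (simp add: zmul_def algebra_simps)
    then show "zmul m a b \<in> pideal m (zmul m \<alpha> \<beta>)" by (simp add: pideal_eq_range)
  qed
qed

definition znorm :: "int \<Rightarrow> int \<times> int \<Rightarrow> int" where
  "znorm m a = (fst a)\<^sup>2 - m * (snd a)\<^sup>2"

lemma znorm_zmul: "znorm m (zmul m a b) = znorm m a * znorm m b"
  by (simp add: znorm_def zmul_def power2_eq_square algebra_simps)

lemma znorm_dvd_of_mem_pideal: "a \<in> pideal m \<alpha> \<Longrightarrow> znorm m \<alpha> dvd znorm m a"
  by (auto simp: pideal_eq_range znorm_zmul)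

lemma mem_pideal_if_znorm_dvd_conj:
  assumes "znorm m (u, v) \<noteq> 0"
    and "znorm m (u, v) dvd fst (zmul m z (u, - v))" "znorm m (u, v) dvd snd (zmul m z (u, - v))"
  shows "z \<in> pideal m (u, v)"
proof -
  obtain k1 k2 where k: "zmul m z (u, - v) = (znorm m (u, v) * k1, znorm m (u, v) * k2)"
    using assms(2,3) by (metis dvdE prod.collapse)
  have "znorm m (u, v) * fst (zmul m (k1, k2) (u, v)) = znorm m (u, v) * fst z"
    "znorm m (u, v) * snd (zmul m (k1, k2) (u, v)) = znorm m (u, v) * snd z"
    using arg_cong[OF k, of "\<lambda>w. zmul m w (u, v)"]
    by (simp_all add: zmul_def znorm_def power2_eq_square algebra_simps)
  then have "z = zmul m (k1, k2) (u, v)" using assms(1) by (simp add: prod_eq_iff)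
  then show ?thesis by (auto simp: pideal_eq_range)
qed

section \<open>Products of ramified primes\<close>

text \<open>For odd squarefree \<open>m\<close> and \<open>D | m\<close> this is the product of the primes \<open>(q, \<surd>m)\<close> over
  the prime factors \<open>q\<close> of \<open>D\<close>, times \<open>p = (2, 1 + \<surd>m)\<close> if \<open>a0\<close>; membership of \<open>a + b\<surd>m\<close>
  in \<open>p\<close> means \<open>a \<equiv> b (mod 2)\<close>.\<close>
definition ramified_ideal :: "int \<Rightarrow> int \<Rightarrow> bool \<Rightarrow> (int \<times> int) set" where
  "ramified_ideal m D a0 = {(a, b). D dvd a \<and> (a0 \<longrightarrow> even (a - b))}"

lemma zideal_ramified_ideal:
  assumes "D dvd m" "a0 \<longrightarrow> odd m"
  shows "zideal m (ramified_ideal m D a0)"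
  unfolding zideal_def
proof (intro conjI ballI allI)
  fix r :: "int \<times> int" and a assume "a \<in> ramified_ideal m D a0"
  moreover obtain r1 r2 where "r = (r1, r2)" by fastforce
  moreover have "(r1*a1 + m*r2*b1) - (r1*b1 + r2*a1) = (r1 - r2)*(a1 - b1) + r2*(m - 1)*b1"
    for a1 b1 :: int by (simp add: algebra_simps)
  ultimately show "zmul m r a \<in> ramified_ideal m D a0"
    using assms by (cases a) (auto simp: ramified_ideal_def zmul_def)
qed (auto simp: ramified_ideal_def zadd_def)

lemma ramified_ideal_one: "ramified_ideal m 1 False = UNIV"
  by (auto simp: ramified_ideal_def)

lemma primeL_eq_ramified_ideal:
  assumes "q dvd m"
  shows "primeL m q = ramified_ideal m q False"
  unfolding primeL_def
proof (rule ideal_gen_eqI)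
  show "zideal m (ramified_ideal m q False)"
    by (rule zideal_ramified_ideal) (use assms in auto)
  fix a assume "a \<in> ramified_ideal m q False"
  then obtain a1 b where a: "a = (a1, b)" "q dvd a1" by (auto simp: ramified_ideal_def)
  then obtain k where "a = (q * k, b)" by (auto elim: dvdE)
  then have "a = zadd (zmul m (k, 0) (q, 0)) (zmul m (b, 0) (0, 1))"
    by (simp add: zadd_def zmul_def)
  then show "a \<in> ideal_gen m {(q, 0), (0, 1)}"
    by (simp add: zideal_lincomb zideal_ideal_gen ideal_gen_generator)
qed (simp add: ramified_ideal_def)

lemma prime2_eq_ramified_ideal:
  assumes "odd m"
  shows "prime2 m = ramified_ideal m 1 True"
  unfolding prime2_def
proof (rule ideal_gen_eqI)
  show "zideal m (ramified_ideal m 1 True)"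
    by (rule zideal_ramified_ideal) (use assms in auto)
  fix a assume "a \<in> ramified_ideal m 1 True"
  moreover obtain a1 b where a: "a = (a1, b)" by fastforce
  ultimately have "even (a1 - b)" by (simp add: ramified_ideal_def del: even_diff)
  then obtain k where "a1 - b = 2 * k" by (rule evenE)
  with a have "a = (b + 2 * k, b)" by simp
  then have "a = zadd (zmul m (b, 0) (1, 1)) (zmul m (k, 0) (2, 0))"
    by (simp add: zadd_def zmul_def)
  then show "a \<in> ideal_gen m {(2, 0), (1, 1)}"
    by (simp add: zideal_lincomb zideal_ideal_gen ideal_gen_generator)
qed (simp add: ramified_ideal_def)

lemma ideal_prod_ramified_ideal_coprime:
  assumes "coprime q D" "q * D dvd m"
  shows "ideal_prod m (ramified_ideal m q False) (ramified_ideal m D False)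
    = ramified_ideal m (q * D) False"
    (is "?P = _")
proof
  show "?P \<subseteq> ramified_ideal m (q * D) False"
  proof (rule ideal_prod_least[OF zideal_ramified_ideal[OF assms(2)]])
    fix a b assume "a \<in> ramified_ideal m q False" "b \<in> ramified_ideal m D False"
    then show "zmul m a b \<in> ramified_ideal m (q * D) False"
      using assms(2) by (cases a, cases b) (auto simp: ramified_ideal_def zmul_def intro: mult_dvd_mono)
  qed simp
  have mem: "zmul m a b \<in> ?P" if "a \<in> {(q, 0), (0, 1)}" "b \<in> {(D, 0), (0, 1)}" for a b
    using that by (intro ideal_prod_mem) (auto simp: ramified_ideal_def)
  obtain u v where uv: "u * q + v * D = 1" using bezout_int[of q D] assms(1) by auto
  have "(0, 1) = zadd (zmul m (u, 0) (zmul m (q, 0) (0, 1))) (zmul m (v, 0) (zmul m (0, 1) (D, 0)))"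
    using uv by (simp add: zadd_def zmul_def)
  then have sqrt_m: "(0, 1) \<in> ?P"
    by (metis zideal_lincomb[OF zideal_ideal_prod] mem insertCI)
  show "ramified_ideal m (q * D) False \<subseteq> ?P"
  proof
    fix a assume "a \<in> ramified_ideal m (q * D) False"
    then obtain a1 b where a: "a = (a1, b)" "q * D dvd a1" by (auto simp: ramified_ideal_def)
    then obtain k where "a = (q * D * k, b)" by (auto elim: dvdE)
    then have "a = zadd (zmul m (k, 0) (zmul m (q, 0) (D, 0))) (zmul m (b, 0) (0, 1))"
      by (simp add: zadd_def zmul_def)
    then show "a \<in> ?P" by (metis zideal_lincomb[OF zideal_ideal_prod] mem sqrt_m insertCI)
  qed
qed

lemma ideal_prod_prime2_ramified_ideal:
  assumes "odd m" "D dvd m"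
  shows "ideal_prod m (ramified_ideal m 1 True) (ramified_ideal m D False) = ramified_ideal m D True"
    (is "?P = _")
proof
  show "?P \<subseteq> ramified_ideal m D True"
  proof (rule ideal_prod_least[OF zideal_ramified_ideal])
    fix a b assume "a \<in> ramified_ideal m 1 True" "b \<in> ramified_ideal m D False"
    moreover have "(a1*a2 + m*b1*b2) - (a1*b2 + b1*a2) = (a1 - b1)*(a2 - b2) + (m - 1)*b1*b2"
      for a1 b1 a2 b2 :: int by (simp add: algebra_simps)
    ultimately show "zmul m a b \<in> ramified_ideal m D True"
      using assms by (cases a, cases b) (auto simp: ramified_ideal_def zmul_def)
  qed (use assms in auto)
  have mem: "zmul m a b \<in> ?P" if "a \<in> {(2, 0), (1, 1)}" "b \<in> {(D, 0), (0, 1)}" for a b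
    using that by (intro ideal_prod_mem) (auto simp: ramified_ideal_def)
  show "ramified_ideal m D True \<subseteq> ?P"
  proof
    fix a assume "a \<in> ramified_ideal m D True"
    then obtain a1 b1 where a: "a = (a1, b1)" "D dvd a1" "even (b1 - a1)"
      by (auto simp: ramified_ideal_def dvd_diff_commute)
    obtain k where "a1 = D * k" using a(2) by (rule dvdE)
    moreover obtain j where "b1 - a1 = 2 * j" using a(3) by (rule evenE)
    ultimately have "a = (D * k, D * k + 2 * j)" using a(1) by simp
    then have "a = zadd (zmul m (k, 0) (zmul m (1, 1) (D, 0))) (zmul m (j, 0) (zmul m (2, 0) (0, 1)))"
      by (simp add: zadd_def zmul_def algebra_simps)
    then show "a \<in> ?P" by (metis zideal_lincomb[OF zideal_ideal_prod] mem insertCI)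
  qed
qed

lemma ideal_prod_list_primeL:
  assumes "distinct is" "\<forall>i\<in>set is. prime (L i)" "inj_on L (set is)" "(\<Prod>i\<in>set is. L i) dvd m"
  shows "ideal_prod_list m (map (\<lambda>i. primeL m (L i)) is) = ramified_ideal m (\<Prod>i\<in>set is. L i) False"
  using assms
proof (induction "is")
  case Nil
  then show ?case by (simp add: pideal_one ramified_ideal_one)
next
  case (Cons i "is")
  have prod: "(\<Prod>j\<in>set (i # is). L j) = L i * (\<Prod>j\<in>set is. L j)"
    using Cons.prems(1) by simp
  then have dvd: "L i * (\<Prod>j\<in>set is. L j) dvd m"
    using Cons.prems(4) by simp
  have "coprime (L i) (\<Prod>j\<in>set is. L j)"
    using Cons.prems by (intro prod_coprime_right primes_coprime) (auto simp: inj_on_def)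
  moreover have "ideal_prod_list m (map (\<lambda>i. primeL m (L i)) is) = ramified_ideal m (\<Prod>j\<in>set is. L j) False"
    using Cons dvd by (auto simp: inj_on_def intro: dvd_mult_right)
  moreover have "primeL m (L i) = ramified_ideal m (L i) False"
    using dvd by (intro primeL_eq_ramified_ideal) (auto intro: dvd_mult_left)
  ultimately have "ideal_prod_list m (map (\<lambda>i. primeL m (L i)) (i # is))
      = ramified_ideal m (L i * (\<Prod>j\<in>set is. L j)) False"
    using ideal_prod_ramified_ideal_coprime[OF _ dvd] by simp
  then show ?case unfolding prod .
qed

lemma ramified_ideal_eq_pideal:
  assumes DE: "D * E = m" and odd: "odd D" "odd E" and \<sigma>: "\<sigma> = 1 \<or> \<sigma> = -1"
    and eq: "D * U\<^sup>2 - E * V\<^sup>2 = \<sigma> * t" and t: "t = (if a0 then 2 else 1)"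
  shows "ramified_ideal m D a0 = pideal m (D * U, V)"
proof
  have "odd m" using DE odd by auto
  have parity: "even (D * U - V)" if a0
  proof -
    have "even (D * U\<^sup>2 - E * V\<^sup>2)" using that eq t by simp
    then have "even U \<longleftrightarrow> even V" using odd by simp
    then show ?thesis using odd by simp
  qed
  have I: "zideal m (ramified_ideal m D a0)"
    using DE \<open>odd m\<close> by (intro zideal_ramified_ideal) auto
  have "(D * U, V) \<in> ramified_ideal m D a0"
    using parity by (simp add: ramified_ideal_def)
  then show "pideal m (D * U, V) \<subseteq> ramified_ideal m D a0"
    using zideal_zmul[OF I] by (auto simp: pideal_eq_range)
  show "ramified_ideal m D a0 \<subseteq> pideal m (D * U, V)"
  proof
    fix z assume z: "z \<in> ramified_ideal m D a0"
    obtain a b where ab: "z = (a, b)" by fastforce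
    define X where "X = a * D * U - m * b * V"
    define Y where "Y = b * D * U - a * V"
    have "D dvd X" "D dvd Y"
      using z DE unfolding X_def Y_def ab by (auto simp: ramified_ideal_def)
    moreover have "even X \<and> even Y" if a0
      using z that parity \<open>odd m\<close> unfolding X_def Y_def ab by (auto simp: ramified_ideal_def)
    moreover have "coprime 2 D" using odd by simp
    ultimately have "D * t dvd X" "D * t dvd Y"
      using t by (auto simp: divides_mult mult.commute[of D])
    moreover have "znorm m (D * U, V) = D * t * \<sigma>"
      using eq unfolding DE[symmetric] by (simp add: znorm_def power2_eq_square algebra_simps)
    moreover have "zmul m z (D * U, - V) = (X, Y)"
      unfolding ab X_def Y_def by (simp add: zmul_def algebra_simps)
    ultimately show "z \<in> pideal m (D * U, V)"
      using \<sigma> odd t by (intro mem_pideal_if_znorm_dvd_conj) auto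
  qed
qed

lemma diff_mod_4_eq_2:
  fixes D E :: int
  assumes "odd D" "odd E" "(D * E) mod 4 = 3"
  shows "(D - E) mod 4 = 2"
proof -
  have "D mod 4 = 1 \<or> D mod 4 = 3" using assms(1) by presburger
  moreover have "E mod 4 = 1 \<or> E mod 4 = 3" using assms(2) by presburger
  moreover have "(D * E) mod 4 = ((D mod 4) * (E mod 4)) mod 4" by (simp add: mod_mult_eq)
  moreover have "(D - E) mod 4 = ((D mod 4) - (E mod 4)) mod 4" by (simp add: mod_diff_eq)
  ultimately show ?thesis using assms(3) by (elim disjE) simp_all
qed

lemma even_divisor_of_4:
  fixes K :: int
  assumes "\<not> 4 dvd K" "even K" "K dvd 4"
  shows "K = 2 \<or> K = -2"
proof -
  have "K \<noteq> 0" "\<bar>K\<bar> \<le> 4" using assms(3) dvd_imp_le_int[of 4 K] by auto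
  then have "K \<in> {-4, -3, -2, -1, 1, 2, 3, 4}" by auto
  then show ?thesis using assms(1,2) by auto
qed

lemma norm_eq_of_principal_ramified_ideal:
  assumes DE: "D * E = m" and odd: "odd D" "odd E" and cop: "coprime D E" and m: "m mod 4 = 3"
    and principal: "is_principal m (ramified_ideal m D a0)" and t: "t = (if a0 then 2 else 1)"
  obtains U V \<sigma> where "\<sigma> = 1 \<or> \<sigma> = -1" "D * U\<^sup>2 - E * V\<^sup>2 = \<sigma> * t"
proof -
  obtain \<alpha> where I: "ramified_ideal m D a0 = pideal m \<alpha>"
    using principal by (auto simp: is_principal_def)
  then have \<alpha>: "\<alpha> \<in> ramified_ideal m D a0" using pideal_generator by simp
  then obtain U V where \<alpha>_eq: "\<alpha> = (D * U, V)" by (auto simp: ramified_ideal_def elim!: dvdE)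
  define K where "K = D * U\<^sup>2 - E * V\<^sup>2"
  have norm_\<alpha>: "znorm m \<alpha> = D * K"
    unfolding \<alpha>_eq K_def DE[symmetric] by (simp add: znorm_def algebra_simps power2_eq_square)
  have K_dvd: "K dvd c" if "(a, b) \<in> ramified_ideal m D a0" "znorm m (a, b) = D * c" for a b c
    using znorm_dvd_of_mem_pideal[of "(a, b)" m \<alpha>] that I norm_\<alpha> odd by auto
  have "K dvd t * t * D"
    by (rule K_dvd[of "t * D" 0]) (use t in \<open>auto simp: ramified_ideal_def znorm_def power2_eq_square\<close>)
  moreover have "K dvd t * t * E"
  proof -
    have "(0, t) \<in> ramified_ideal m D a0" using t by (simp add: ramified_ideal_def)
    moreover have "znorm m (0, t) = D * - (t * t * E)"
      using DE by (simp add: znorm_def power2_eq_square algebra_simps)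
    ultimately show ?thesis using K_dvd dvd_minus_iff by blast
  qed
  ultimately have "K dvd gcd (t * t * D) (t * t * E)" by (rule gcd_greatest)
  then have K_dvd_t2: "K dvd t * t" using cop by (simp add: gcd_mult_left)
  show ?thesis
  proof (cases a0)
    case False
    then have "\<bar>K\<bar> = 1" using K_dvd_t2 t by (simp add: zdvd1_eq)
    then show ?thesis using that[of _ U V] t False unfolding K_def by (auto simp: abs_if split: if_splits)
  next
    case True
    have "K dvd D - E"
      using K_dvd[of D 1 "D - E"] True odd DE
      by (auto simp: ramified_ideal_def znorm_def power2_eq_square algebra_simps)
    moreover have "(D - E) mod 4 = 2" using diff_mod_4_eq_2 odd DE m by simp
    ultimately have not_4_dvd: "\<not> 4 dvd K" by (auto dest: dvd_trans)
    have "even (D * U - V)" using \<alpha> True by (simp add: \<alpha>_eq ramified_ideal_def)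
    then have "even (znorm m \<alpha>)" using DE odd by (auto simp: \<alpha>_eq znorm_def)
    then have "even K" using norm_\<alpha> odd by simp
    moreover have "K dvd 4" using K_dvd_t2 True t by simp
    ultimately have "K = 2 \<or> K = -2" using not_4_dvd even_divisor_of_4 by blast
    then show ?thesis using that[of _ U V] t True unfolding K_def by auto
  qed
qed

lemma principal_ramified_ideal_iff:
  assumes "D * E = m" "odd D" "odd E" "coprime D E" "m mod 4 = 3"
  shows "is_principal m (ramified_ideal m D a0) \<longleftrightarrow>
    (\<exists>U V \<sigma>. (\<sigma> = 1 \<or> \<sigma> = -1) \<and> D * U\<^sup>2 - E * V\<^sup>2 = \<sigma> * (if a0 then 2 else 1))"
proof
  assume "is_principal m (ramified_ideal m D a0)"
  then obtain U V \<sigma> where "\<sigma> = 1 \<or> \<sigma> = -1" "D * U\<^sup>2 - E * V\<^sup>2 = \<sigma> * (if a0 then 2 else 1)"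
    by (rule norm_eq_of_principal_ramified_ideal[OF assms _ refl])
  then show "\<exists>U V \<sigma>. (\<sigma> = 1 \<or> \<sigma> = -1) \<and> D * U\<^sup>2 - E * V\<^sup>2 = \<sigma> * (if a0 then 2 else 1)"
    by blast
next
  assume "\<exists>U V \<sigma>. (\<sigma> = 1 \<or> \<sigma> = -1) \<and> D * U\<^sup>2 - E * V\<^sup>2 = \<sigma> * (if a0 then 2 else 1)"
  then obtain U V \<sigma> where "\<sigma> = 1 \<or> \<sigma> = -1" "D * U\<^sup>2 - E * V\<^sup>2 = \<sigma> * (if a0 then 2 else 1)"
    by blast
  then have "ramified_ideal m D a0 = pideal m (D * U, V)"
    by (rule ramified_ideal_eq_pideal[OF assms(1-3)]) simp
  then show "is_principal m (ramified_ideal m D a0)"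
    by (auto simp: is_principal_def)
qed

section \<open>Legendre symbols\<close>

lemma Legendre_cases: "\<not> p dvd a \<Longrightarrow> Legendre a p = 1 \<or> Legendre a p = -1"
  by (auto simp: Legendre_def cong_0_iff)

lemma euler_criterion_int:
  assumes "prime p" "2 < p"
  shows "[Legendre a p = a ^ nat ((p - 1) div 2)] (mod p)"
proof -
  have "prime (nat p)" "2 < nat p" "int (nat p) = p" using assms by auto
  moreover have "(nat p - 1) div 2 = nat ((p - 1) div 2)"
    using assms by (simp add: nat_diff_distrib nat_div_distrib)
  ultimately show ?thesis using euler_criterion[of "nat p" a] by simp
qed

lemma sign_cong_imp_eq:
  fixes p x y :: int
  assumes "2 < p" "x = 1 \<or> x = -1" "y = 1 \<or> y = -1" "[x = y] (mod p)"
  shows "x = y"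
proof (rule ccontr)
  assume "x \<noteq> y"
  then have "p dvd 2" using assms by (auto simp: cong_iff_dvd_diff)
  then show False using assms(1) zdvd_imp_le[of p 2] by simp
qed

lemma Legendre_mult:
  assumes "prime p" "2 < p"
  shows "Legendre (a * b) p = Legendre a p * Legendre b p"
proof (cases "p dvd a \<or> p dvd b")
  case True
  then show ?thesis by (auto simp: Legendre_def cong_0_iff)
next
  case False
  then have "\<not> p dvd a * b" using assms by (simp add: prime_dvd_mult_iff)
  have "[Legendre a p * Legendre b p = a ^ nat ((p - 1) div 2) * b ^ nat ((p - 1) div 2)] (mod p)"
    using euler_criterion_int[OF assms, of a] euler_criterion_int[OF assms, of b] by (rule cong_mult)
  then have "[Legendre (a * b) p = Legendre a p * Legendre b p] (mod p)"
    using euler_criterion_int[OF assms, of "a * b"]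
    by (metis cong_sym cong_trans power_mult_distrib)
  moreover have "Legendre a p * Legendre b p = 1 \<or> Legendre a p * Legendre b p = -1"
    using Legendre_cases[of p a] Legendre_cases[of p b] False by auto
  ultimately show ?thesis
    using sign_cong_imp_eq assms(2) Legendre_cases[OF \<open>\<not> p dvd a * b\<close>] by blast
qed

lemma Legendre_one:
  assumes "prime p"
  shows "Legendre 1 p = 1"
proof -
  have "QuadRes p 1" unfolding QuadRes_def by (rule exI[of _ 1]) simp
  moreover have "\<not> p dvd 1" using prime_ge_2_int[OF assms] by simp
  ultimately show ?thesis by (simp add: Legendre_def cong_0_iff)
qed

lemma Legendre_prod:
  assumes "prime p" "2 < p" "finite S"
  shows "Legendre (\<Prod>i\<in>S. f i) p = (\<Prod>i\<in>S. Legendre (f i) p)"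
  using assms(3)
  by (induction S rule: finite_induct) (simp_all add: Legendre_one[OF assms(1)] Legendre_mult[OF assms(1,2)])

lemma Legendre_minus_one:
  assumes "prime p" "2 < p"
  shows "Legendre (-1) p = (if p mod 4 = 1 then 1 else -1)"
proof -
  have "[Legendre (-1) p = (-1) ^ nat ((p - 1) div 2)] (mod p)"
    by (rule euler_criterion_int[OF assms])
  moreover have "odd p" using assms by (simp add: prime_odd_int)
  then have "even (nat ((p - 1) div 2)) \<longleftrightarrow> p mod 4 = 1"
    using assms(2) by (simp add: even_nat_iff) presburger
  then have "(-1::int) ^ nat ((p - 1) div 2) = (if p mod 4 = 1 then 1 else -1)"
    by simp
  ultimately have "[Legendre (-1) p = (if p mod 4 = 1 then 1 else -1)] (mod p)"
    by simp
  then show ?thesis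
    by (rule sign_cong_imp_eq[OF assms(2), rotated 2]) (use Legendre_cases[of p "-1"] assms(2) in auto)
qed

lemma Legendre_eq_of_cong_mult_square:
  assumes "prime p" "2 < p" "[a * y\<^sup>2 = b] (mod p)" "\<not> p dvd b"
  shows "Legendre a p = Legendre b p"
proof -
  have "\<not> p dvd a"
    using assms(3,4) by (metis cong_dvd_iff dvd_mult2)
  have "[(a * y)\<^sup>2 = a * b] (mod p)"
    using cong_scalar_left[OF assms(3), of a] by (simp add: power2_eq_square algebra_simps)
  then have "QuadRes p (a * b)" unfolding QuadRes_def by blast
  moreover have "\<not> p dvd a * b" using \<open>\<not> p dvd a\<close> assms by (simp add: prime_dvd_mult_iff)
  ultimately have "Legendre (a * b) p = 1" by (simp add: Legendre_def cong_0_iff)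
  then have "Legendre a p * Legendre b p = 1" using Legendre_mult[OF assms(1,2)] by simp
  then show ?thesis
    using Legendre_cases[OF \<open>\<not> p dvd a\<close>] Legendre_cases[OF assms(4)] by auto
qed

lemma Legendre_swap:
  assumes "prime p" "prime q" "2 < p" "2 < q" "p \<noteq> q" "p mod 4 = 1"
  shows "Legendre q p = Legendre p q"
proof -
  have "prime (nat p)" "prime (nat q)" using assms by auto
  then have "Legendre p q * Legendre q p = (-1::int) ^ nat ((p - 1) div 2 * ((q - 1) div 2))"
    using Quadratic_Reciprocity_int assms(3-5) by blast
  moreover have "even (nat ((p - 1) div 2 * ((q - 1) div 2)))"
    using assms(3,4,6) by (simp add: even_nat_iff) presburger
  ultimately have "Legendre p q * Legendre q p = 1" by simp
  moreover have "\<not> q dvd p" "\<not> p dvd q"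
    using assms primes_dvd_imp_eq[of q p] primes_dvd_imp_eq[of p q] by auto
  ultimately show ?thesis using Legendre_cases[of q p] Legendre_cases[of p q] by auto
qed

lemma Legendre_two:
  assumes p: "prime p" "p mod 8 = 3 \<or> p mod 8 = 5"
  shows "Legendre 2 p = -1"
proof -
  have "2 < p" using p prime_ge_2_int[of p] by (cases "p = 2") auto
  then have pn: "prime (nat p)" "2 < nat p" "int (nat p) = p" using p by auto
  have "[2 \<noteq> 0] (mod int (nat p))" using pn \<open>2 < p\<close> by (auto simp: cong_0_iff zdvd_not_zless)
  then interpret G: GAUSS "nat p" 2 using pn by unfold_locales auto
  define h where "h = (p - 1) div 2"
  have A: "G.A = {0<..h}" unfolding G.A_def h_def pn(3) ..
  have C: "G.C = (\<lambda>x. x * 2) ` {0<..h}"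
  proof -
    have "(\<lambda>x. x mod p) ` (\<lambda>x. x * 2) ` {0<..h} = (\<lambda>x. x * 2) ` {0<..h}"
    proof (rule image_cong[OF refl, THEN trans])
      show "x \<in> (\<lambda>x. x * 2) ` {0<..h} \<Longrightarrow> x mod p = x" for x
        using \<open>2 < p\<close> unfolding h_def by auto
    qed (simp add: image_ident)
    then show ?thesis unfolding G.C_def G.B_def A pn(3) by simp
  qed
  have "G.E = (\<lambda>x. x * 2) ` {0<..h} \<inter> {h<..}"
    unfolding G.E_def C h_def pn(3) ..
  also have "\<dots> = (\<lambda>x. x * 2) ` {h div 2 + 1 .. h}"
    by auto
  finally have "card G.E = nat (h - h div 2)"
    by (simp add: card_image inj_on_def)
  moreover have "odd (h - h div 2)" "0 \<le> h - h div 2"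
    using p(2) \<open>2 < p\<close> unfolding h_def by presburger+
  ultimately have "odd (card G.E)" by (simp add: even_nat_iff)
  then show ?thesis using G.gauss_lemma pn(3) by simp
qed

lemma prime_3_mod_4_not_dvd_square_plus_one:
  fixes p s :: int
  assumes "prime p" "p mod 4 = 3"
  shows "\<not> p dvd s\<^sup>2 + 1"
proof
  assume "p dvd s\<^sup>2 + 1"
  then have "[1 * s\<^sup>2 = -1] (mod p)" by (simp add: cong_iff_dvd_diff)
  moreover have "2 < p" using assms prime_ge_2_int[of p] by (cases "p = 2") auto
  ultimately have "Legendre 1 p = Legendre (-1) p"
    using Legendre_eq_of_cong_mult_square assms(1) by force
  then show False using Legendre_one Legendre_minus_one \<open>2 < p\<close> assms by simp
qed

section \<open>Deng--Li fields\<close>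

lemma deng_liD:
  assumes "deng_li n l m"
  shows "n \<ge> 2" "even n" "\<forall>i\<in>{1..n}. prime (l i)" "inj_on l {1..n}"
    "m = (\<Prod>i\<in>{1..n}. l i)" "[l 1 = 3] (mod 8)" "\<forall>i\<in>{2..n}. [l i = 5] (mod 8)"
    "Legendre (l 1) (l 2) = -1" "\<forall>j\<in>{3..n}. Legendre (l 1) (l j) = 1"
    "\<forall>i j. 2 \<le> i \<and> i < j \<and> j \<le> n \<longrightarrow> Legendre (l i) (l j) = -1"
  using assms unfolding deng_li_def by blast+

lemma deng_li_prime:
  assumes DL: "deng_li n l m" and i: "i \<in> {1..n}"
  shows "prime (l i)" "2 < l i"
    and "i = 1 \<Longrightarrow> l i mod 8 = 3" "2 \<le> i \<Longrightarrow> l i mod 8 = 5"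
    and "i = 1 \<Longrightarrow> l i mod 4 = 3" "2 \<le> i \<Longrightarrow> l i mod 4 = 1"
proof -
  show prime: "prime (l i)" using deng_liD(3)[OF DL] i by blast
  show mod8: "i = 1 \<Longrightarrow> l i mod 8 = 3" "2 \<le> i \<Longrightarrow> l i mod 8 = 5"
    using deng_liD(6,7)[OF DL] i by (auto simp: cong_def)
  then show "i = 1 \<Longrightarrow> l i mod 4 = 3" "2 \<le> i \<Longrightarrow> l i mod 4 = 1"
    by presburger+
  have "l i \<noteq> 2" using mod8 i by (cases "i = 1") auto
  then show "2 < l i" using prime_ge_2_int[OF prime] by simp
qed

lemma deng_li_coprime:
  assumes DL: "deng_li n l m" and "S \<subseteq> {1..n}" "T \<subseteq> {1..n}" "S \<inter> T = {}"
  shows "coprime (\<Prod>i\<in>S. l i) (\<Prod>i\<in>T. l i)"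
proof (intro prod_coprime_left prod_coprime_right primes_coprime)
  fix i j assume "i \<in> S" "j \<in> T"
  then have "i \<in> {1..n}" "j \<in> {1..n}" "i \<noteq> j" using assms by auto
  then show "prime (l i)" "prime (l j)" "l i \<noteq> l j"
    using deng_li_prime(1)[OF DL] inj_onD[OF deng_liD(4)[OF DL]] by blast+
qed

lemma deng_li_m_mod_4_pos:
  assumes DL: "deng_li n l m"
  shows "m mod 4 = 3" "odd m" "m > 0"
proof -
  have "{1..n} = insert 1 {2..n}" using deng_liD(1)[OF DL] by auto
  then have m: "m = l 1 * (\<Prod>i\<in>{2..n}. l i)" using deng_liD(5)[OF DL] by simp
  have "[l 1 = 3] (mod 4)"
    using deng_li_prime(5)[OF DL, of 1] deng_liD(1)[OF DL] by (simp add: cong_def)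
  moreover have "[\<Prod>i\<in>{2..n}. l i = (\<Prod>i\<in>{2..n}. 1)] (mod 4)"
    by (rule cong_prod) (use deng_li_prime(6)[OF DL] in \<open>auto simp: cong_def\<close>)
  ultimately have "[m = 3 * 1] (mod 4)" unfolding m by (intro cong_mult) simp_all
  then show "m mod 4 = 3" by (simp add: cong_def)
  then show "odd m" by presburger
  have "(\<Prod>i\<in>{1..n}. l i) > 0" using deng_li_prime(2)[OF DL] by (intro prod_pos) force
  then show "m > 0" using deng_liD(5)[OF DL] by simp
qed

lemma deng_li_split:
  assumes DL: "deng_li n l m" and A: "A \<subseteq> {1..n}"
  shows "(\<Prod>i\<in>A. l i) * (\<Prod>i\<in>{1..n} - A. l i) = m"
    and "odd (\<Prod>i\<in>A. l i)" "odd (\<Prod>i\<in>{1..n} - A. l i)"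
    and "coprime (\<Prod>i\<in>A. l i) (\<Prod>i\<in>{1..n} - A. l i)"
proof -
  show split: "(\<Prod>i\<in>A. l i) * (\<Prod>i\<in>{1..n} - A. l i) = m"
    using prod.subset_diff[of A "{1..n}" l] A deng_liD(5)[OF DL] by (simp add: mult.commute)
  then show "odd (\<Prod>i\<in>A. l i)" "odd (\<Prod>i\<in>{1..n} - A. l i)"
    using deng_li_m_mod_4_pos(2)[OF DL] by auto
  show "coprime (\<Prod>i\<in>A. l i) (\<Prod>i\<in>{1..n} - A. l i)"
    using A by (intro deng_li_coprime[OF DL]) auto
qed

lemma ram_ideal_eq_ramified_ideal:
  assumes DL: "deng_li n l m" and A: "A \<subseteq> {1..n}"
  shows "ram_ideal m l n a0 A = ramified_ideal m (\<Prod>i\<in>A. l i) a0"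
proof -
  define "is" where "is = filter (\<lambda>i. i \<in> A) [1..<n+1]"
  have set_is: "set is = A" using A unfolding is_def by auto
  have "odd m" using deng_li_m_mod_4_pos[OF DL] by simp
  have dvd: "(\<Prod>i\<in>A. l i) dvd m" using deng_li_split(1)[OF DL A] by (metis dvd_triv_left)
  have "distinct is" by (simp add: is_def)
  moreover have "\<forall>i\<in>set is. prime (l i)" using A deng_li_prime(1)[OF DL] by (auto simp: set_is)
  moreover have "inj_on l (set is)" using inj_on_subset[OF deng_liD(4)[OF DL] A] by (simp add: set_is)
  ultimately have "ideal_prod_list m (map (\<lambda>i. primeL m (l i)) is) = ramified_ideal m (\<Prod>i\<in>A. l i) False"
    using ideal_prod_list_primeL[of "is" l m] dvd by (simp add: set_is)
  then show ?thesis
    unfolding ram_ideal_def is_def[symmetric]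
    using prime2_eq_ramified_ideal[OF \<open>odd m\<close>] ideal_prod_prime2_ramified_ideal[OF \<open>odd m\<close> dvd]
      pideal_one ideal_prod_UNIV_left[OF zideal_ramified_ideal[OF dvd]]
    by simp
qed

lemma ram_ideal_principal_iff:
  assumes DL: "deng_li n l m" and A: "A \<subseteq> {1..n}"
  shows "is_principal m (ram_ideal m l n a0 A) \<longleftrightarrow>
    (\<exists>U V \<sigma>. (\<sigma> = 1 \<or> \<sigma> = -1) \<and>
      (\<Prod>i\<in>A. l i) * U\<^sup>2 - (\<Prod>i\<in>{1..n} - A. l i) * V\<^sup>2 = \<sigma> * (if a0 then 2 else 1))"
  unfolding ram_ideal_eq_ramified_ideal[OF DL A]
  by (rule principal_ramified_ideal_iff[OF deng_li_split[OF DL A] deng_li_m_mod_4_pos(1)[OF DL]])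

lemma Legendre_deng_li:
  assumes DL: "deng_li n l m" and j: "j \<in> {2..n}" and i: "i \<in> {1..n}" "i \<noteq> j"
  shows "Legendre (l i) (l j) = (if i = 1 \<and> 3 \<le> j then 1 else -1)"
proof -
  have "j \<in> {1..n}" using j by auto
  have swap: "Legendre (l i) (l j) = Legendre (l j) (l i)"
    using deng_li_prime[OF DL \<open>j \<in> {1..n}\<close>] deng_li_prime[OF DL i(1)] j i
      inj_onD[OF deng_liD(4)[OF DL] _ i(1) \<open>j \<in> {1..n}\<close>]
    by (intro Legendre_swap) auto
  show ?thesis
  proof (cases "i = 1")
    case True
    then show ?thesis using deng_liD(8,9)[OF DL] j by (cases "j = 2") auto
  next
    case False
    then have "2 \<le> i" using i by auto
    then show ?thesis
      using deng_liD(10)[OF DL] swap i j False by (cases "i < j") (auto simp: not_less)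
  qed
qed

lemma Legendre_prod_deng_li:
  assumes DL: "deng_li n l m" and j: "j \<in> {2..n}" and C: "C \<subseteq> {1..n}" "j \<notin> C"
  shows "Legendre (\<Prod>i\<in>C. l i) (l j) = (-1) ^ card (if j = 2 then C else C - {1})"
proof -
  have "finite C" using C finite_subset by blast
  have "j \<in> {1..n}" using j by auto
  have "Legendre (\<Prod>i\<in>C. l i) (l j) = (\<Prod>i\<in>C. Legendre (l i) (l j))"
    using deng_li_prime(1,2)[OF DL \<open>j \<in> {1..n}\<close>] \<open>finite C\<close> by (rule Legendre_prod)
  also have "\<dots> = (\<Prod>i\<in>C. if i = 1 \<and> 3 \<le> j then 1 else -1)"
    using C by (intro prod.cong refl Legendre_deng_li[OF DL j]) auto
  also have "\<dots> = (-1) ^ card (C \<inter> - {i. i = 1 \<and> 3 \<le> j})"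
    using \<open>finite C\<close> by (simp add: prod.If_cases)
  also have "C \<inter> - {i. i = 1 \<and> 3 \<le> j} = (if j = 2 then C else C - {1})"
    using j by auto
  finally show ?thesis .
qed

lemma norm_eq_Legendre_cofactor:
  assumes DL: "deng_li n l m" and A: "A \<subseteq> {1..n}" and \<sigma>: "\<sigma> = 1 \<or> \<sigma> = -1"
    and eq: "(\<Prod>i\<in>A. l i) * U\<^sup>2 - (\<Prod>i\<in>{1..n} - A. l i) * V\<^sup>2 = \<sigma> * (if a0 then 2 else 1)"
    and j: "j \<in> A" "j \<in> {2..n}"
  shows "Legendre (\<Prod>i\<in>{1..n} - A. l i) (l j) = (if a0 then -1 else 1)"
proof -
  define E where "E = (\<Prod>i\<in>{1..n} - A. l i)"
  define t :: int where "t = (if a0 then 2 else 1)"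
  have "j \<in> {1..n}" using j by auto
  note p = deng_li_prime[OF DL this]
  have "l j dvd (\<Prod>i\<in>A. l i)" using A j by (intro dvd_prodI) (auto intro: finite_subset)
  then have "l j dvd (-E) * V\<^sup>2 - \<sigma> * t"
    using eq unfolding E_def t_def
    by (metis diff_conv_add_uminus dvd_minus_iff dvd_mult2 minus_diff_eq minus_mult_left eq_diff_eq)
  then have "[(-E) * V\<^sup>2 = \<sigma> * t] (mod l j)" by (simp add: cong_iff_dvd_diff)
  moreover have "\<not> l j dvd \<sigma> * t"
    using \<sigma> p(2) zdvd_imp_le[of "l j" 2] unfolding t_def by auto
  ultimately have "Legendre (-E) (l j) = Legendre (\<sigma> * t) (l j)"
    using Legendre_eq_of_cong_mult_square p(1,2) by blast
  moreover have "Legendre (-E) (l j) = Legendre E (l j)"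
    using Legendre_mult[OF p(1,2), of "-1" E] Legendre_minus_one[OF p(1,2)] p(6) j by simp
  moreover have "Legendre \<sigma> (l j) = 1"
    using \<sigma> Legendre_one[OF p(1)] Legendre_minus_one[OF p(1,2)] p(6) j by auto
  moreover have "Legendre t (l j) = (if a0 then -1 else 1)"
    using Legendre_one[OF p(1)] Legendre_two[OF p(1)] p(4) j unfolding t_def by auto
  ultimately show ?thesis using Legendre_mult[OF p(1,2)] unfolding E_def by simp
qed

lemma norm_eq_Legendre_other_side:
  assumes DL: "deng_li n l m" and A: "A \<subseteq> {1..n}" and \<sigma>: "\<sigma> = 1 \<or> \<sigma> = -1"
    and eq: "(\<Prod>i\<in>A. l i) * U\<^sup>2 - (\<Prod>i\<in>{1..n} - A. l i) * V\<^sup>2 = \<sigma> * (if a0 then 2 else 1)"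
    and j: "j \<in> {2..n}"
  obtains C where "C = A \<or> C = {1..n} - A" "C \<subseteq> {1..n}" "j \<notin> C"
    "Legendre (\<Prod>i\<in>C. l i) (l j) = (if a0 then -1 else 1)"
proof (cases "j \<in> A")
  case True
  then show ?thesis using that[of "{1..n} - A"] norm_eq_Legendre_cofactor[OF assms(1-4) True j] by auto
next
  case False
  have A': "{1..n} - ({1..n} - A) = A" using A by auto
  then have "(\<Prod>i\<in>{1..n} - A. l i) * V\<^sup>2 - (\<Prod>i\<in>{1..n} - ({1..n} - A). l i) * U\<^sup>2
      = - \<sigma> * (if a0 then 2 else 1)"
    using eq by simp
  then have "Legendre (\<Prod>i\<in>{1..n} - ({1..n} - A). l i) (l j) = (if a0 then -1 else 1)"
    by (rule norm_eq_Legendre_cofactor[OF DL _ _ _ _ j, rotated 2]) (use False j \<sigma> in auto)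
  then show ?thesis using that[of A] A False unfolding A' by auto
qed

lemma norm_eq_parity_constraints:
  assumes DL: "deng_li n l m" and A: "A \<subseteq> {1..n}" and \<sigma>: "\<sigma> = 1 \<or> \<sigma> = -1"
    and eq: "(\<Prod>i\<in>A. l i) * U\<^sup>2 - (\<Prod>i\<in>{1..n} - A. l i) * V\<^sup>2 = \<sigma> * (if a0 then 2 else 1)"
  shows "even (card A) \<longleftrightarrow> \<not> a0"
    and "j \<in> {3..n} \<Longrightarrow> 1 \<in> A \<longleftrightarrow> j \<in> A"
proof -
  have n: "2 \<le> n" "even n" using deng_liD(1,2)[OF DL] by auto
  have "card A + card ({1..n} - A) = n"
    using A card_Diff_subset[of A "{1..n}"] card_mono[OF _ A] by (simp add: finite_subset)
  then have same_parity: "even (card C) \<longleftrightarrow> even (card A)" if "C = A \<or> C = {1..n} - A" for C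
    using that n(2) by (metis even_add)
  have sign: "(-1::int) ^ k = (if a0 then -1 else 1) \<longleftrightarrow> (even k \<longleftrightarrow> \<not> a0)" for k
    by (cases "even k") auto
  obtain C where C: "C = A \<or> C = {1..n} - A" "C \<subseteq> {1..n}" "2 \<notin> C"
    "Legendre (\<Prod>i\<in>C. l i) (l 2) = (if a0 then -1 else 1)"
    using norm_eq_Legendre_other_side[OF assms, of 2] n(1) by auto
  moreover have "Legendre (\<Prod>i\<in>C. l i) (l 2) = (-1) ^ card C"
    using Legendre_prod_deng_li[OF DL _ C(2,3)] n(1) by simp
  ultimately have "(-1::int) ^ card C = (if a0 then -1 else 1)" by simp
  then show par: "even (card A) \<longleftrightarrow> \<not> a0"
    using sign same_parity[OF C(1)] by simp
  assume j: "j \<in> {3..n}"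
  then obtain C where C: "C = A \<or> C = {1..n} - A" "C \<subseteq> {1..n}" "j \<notin> C"
    "Legendre (\<Prod>i\<in>C. l i) (l j) = (if a0 then -1 else 1)"
    using norm_eq_Legendre_other_side[OF assms, of j] by auto
  moreover have "Legendre (\<Prod>i\<in>C. l i) (l j) = (-1) ^ card (C - {1})"
    using Legendre_prod_deng_li[OF DL _ C(2,3)] j by simp
  ultimately have "(-1::int) ^ card (C - {1}) = (if a0 then -1 else 1)" by simp
  then have odd_side: "even (card (C - {1})) \<longleftrightarrow> \<not> a0" using sign by blast
  have "finite C" using C(2) by (rule finite_subset) simp
  have "1 \<notin> C"
  proof
    assume "1 \<in> C"
    then have "card C = Suc (card (C - {1}))" using card.remove[OF \<open>finite C\<close>] by blast
    moreover have "even (card C) \<longleftrightarrow> \<not> a0" using same_parity[OF C(1)] par by blast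
    ultimately show False using odd_side by simp
  qed
  moreover have "1 \<in> {1..n}" "j \<in> {1..n}" using j by auto
  ultimately show "1 \<in> A \<longleftrightarrow> j \<in> A" using C(1,3) by blast
qed

lemma subset_parity_classification:
  fixes n :: nat
  assumes A: "A \<subseteq> {1..n}" and n: "2 \<le> n" "even n"
    and par: "even (card A) \<longleftrightarrow> \<not> a0" and side: "\<And>j. j \<in> {3..n} \<Longrightarrow> 1 \<in> A \<longleftrightarrow> j \<in> A"
  shows "(\<not> a0 \<and> A = {}) \<or> (\<not> a0 \<and> A = {1..n}) \<or> (a0 \<and> A = {2}) \<or> (a0 \<and> A = {1} \<union> {3..n})"
proof -
  have split: "{1..n} = {1, 2} \<union> {3..n}" using n(1) by auto
  have "A = A \<inter> {1, 2} \<union> A \<inter> {3..n}" using A split by blast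
  also have "A \<inter> {3..n} = (if 1 \<in> A then {3..n} else {})" using side by auto
  finally have A_eq: "A = A \<inter> {1, 2} \<union> (if 1 \<in> A then {3..n} else {})" .
  consider "1 \<in> A" "2 \<in> A" | "1 \<in> A" "2 \<notin> A" | "1 \<notin> A" "2 \<in> A" | "1 \<notin> A" "2 \<notin> A"
    by blast
  then show ?thesis
  proof cases
    case 1
    then have "A = {1..n}" using A_eq split by simp
    then show ?thesis using par n(2) by simp
  next
    case 2
    then have "A = {1} \<union> {3..n}" using A_eq by auto
    moreover have "card ({1} \<union> {3..n}) = n - 1" using n(1) by simp
    ultimately show ?thesis using par n by auto
  next
    case 3
    then have "A = {2}" using A_eq by auto
    then show ?thesis using par by simp
  next
    case 4
    then have "A = {}" using A_eq by auto
    then show ?thesis using par by simp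
  qed
qed

lemma norm_eq_classification:
  assumes DL: "deng_li n l m" and A: "A \<subseteq> {1..n}" and \<sigma>: "\<sigma> = 1 \<or> \<sigma> = -1"
    and eq: "(\<Prod>i\<in>A. l i) * U\<^sup>2 - (\<Prod>i\<in>{1..n} - A. l i) * V\<^sup>2 = \<sigma> * (if a0 then 2 else 1)"
  shows "(\<not> a0 \<and> A = {}) \<or> (\<not> a0 \<and> A = {1..n}) \<or> (a0 \<and> A = {2}) \<or> (a0 \<and> A = {1} \<union> {3..n})"
  using subset_parity_classification[OF A deng_liD(1,2)[OF DL] norm_eq_parity_constraints[OF assms]] .

section \<open>The fundamental unit\<close>

lemma pell_solution_gt_one_pos:
  fixes m x y :: int
  assumes "m > 0" "x\<^sup>2 - m * y\<^sup>2 = 1" "x + y * sqrt m > 1"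
  shows "x > 1" "y > 0"
proof -
  define e where "e = x + y * sqrt m"
  define e' where "e' = x - y * sqrt m"
  have "e * e' = x\<^sup>2 - y\<^sup>2 * (sqrt m)\<^sup>2" unfolding e_def e'_def by (simp add: power2_eq_square algebra_simps)
  also have "\<dots> = 1" using assms(1) arg_cong[OF assms(2), of real_of_int] by (simp add: mult.commute)
  finally have "e * e' = 1" .
  moreover have "e > 1" using assms(3) by (simp add: e_def)
  ultimately have "e' = 1 / e" by (simp add: eq_divide_eq mult.commute)
  then have "0 < e'" "e' < 1" using \<open>e > 1\<close> by simp_all
  then have "(e - 1) * (1 - e') > 0" using \<open>e > 1\<close> by simp
  then have "e + e' > 2" using \<open>e * e' = 1\<close> by (simp add: algebra_simps)
  then show "x > 1" unfolding e_def e'_def by simp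
  have "e - e' > 0" using \<open>e > 1\<close> \<open>e' < 1\<close> by simp
  then show "y > 0" using assms(1) unfolding e_def e'_def by (simp add: zero_less_mult_iff)
qed

lemma deng_li_fund_unit_norm:
  assumes DL: "deng_li n l m" and fu: "fund_unit m x y"
  shows "x\<^sup>2 - m * y\<^sup>2 = 1"
proof (rule ccontr)
  assume "x\<^sup>2 - m * y\<^sup>2 \<noteq> 1"
  then have "x\<^sup>2 + 1 = m * y\<^sup>2" using fu by (simp add: fund_unit_def zunit_def)
  moreover have "1 \<in> {1..n}" using deng_liD(1)[OF DL] by auto
  then have "l 1 dvd m" using deng_liD(5)[OF DL] by (simp add: dvd_prodI)
  ultimately have "l 1 dvd x\<^sup>2 + 1" by simp
  then show False
    using prime_3_mod_4_not_dvd_square_plus_one deng_li_prime[OF DL \<open>1 \<in> {1..n}\<close>] by simp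
qed

lemma deng_li_fund_unit_pos:
  assumes DL: "deng_li n l m" and fu: "fund_unit m x y"
  shows "x > 1" "y > 0"
  using pell_solution_gt_one_pos[OF deng_li_m_mod_4_pos(3)[OF DL] deng_li_fund_unit_norm[OF assms]] fu
  by (auto simp: fund_unit_def)

lemma coprime_mult_eq_square_int:
  fixes P Q W :: int
  assumes "P > 0" "Q > 0" "coprime P Q" "P * Q = W\<^sup>2" "W > 0"
  obtains r s where "P = r\<^sup>2" "Q = s\<^sup>2" "r > 0" "s > 0" "r * s = W"
proof -
  have "coprime (nat P) (nat Q)" using assms by (simp add: coprime_int_iff[symmetric])
  moreover have "nat P * nat Q = (nat W)\<^sup>2"
    using assms by (metis nat_mult_distrib nat_power_eq less_imp_le)
  ultimately have "is_nth_power 2 (nat P)" "is_nth_power 2 (nat Q)"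
    using is_nth_power_mult_coprime_natD[of "nat P" "nat Q" 2] assms(1,2) by auto
  then obtain r s where "nat P = r\<^sup>2" "nat Q = s\<^sup>2" by (auto elim!: is_nth_powerE)
  then have rs: "P = (int r)\<^sup>2" "Q = (int s)\<^sup>2"
    using assms(1,2) by (metis int_nat_eq less_imp_le of_nat_power)+
  then have "int r > 0" "int s > 0" using assms(1,2) by auto
  moreover have "(int r * int s)\<^sup>2 = W\<^sup>2" using rs assms(4) by (simp add: power_mult_distrib)
  then have "int r * int s = W" using \<open>int r > 0\<close> \<open>int s > 0\<close> assms(5)
    by (simp add: power2_eq_iff_nonneg)
  ultimately show ?thesis using that rs by blast
qed

lemma deng_li_prod_dvd:
  assumes DL: "deng_li n l m" and S: "S \<subseteq> {1..n}" "\<And>i. i \<in> S \<Longrightarrow> l i dvd P"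
  shows "(\<Prod>i\<in>S. l i) dvd P"
proof -
  have "finite S" using S(1) by (rule finite_subset) simp
  then show ?thesis using S
  proof (induction S rule: finite_induct)
    case (insert i S)
    then have "coprime (\<Prod>j\<in>{i}. l j) (\<Prod>j\<in>S. l j)" by (intro deng_li_coprime[OF DL]) auto
    then show ?case using insert by (simp add: divides_mult)
  qed simp
qed

lemma deng_li_factorization:
  assumes DL: "deng_li n l m" and PQ: "P > 0" "Q > 0" "coprime P Q" "P * Q = m * W\<^sup>2" "W > 0"
  obtains A r s where "A \<subseteq> {1..n}" "P = (\<Prod>i\<in>A. l i) * r\<^sup>2" "Q = (\<Prod>i\<in>{1..n} - A. l i) * s\<^sup>2"
    "r > 0" "s > 0" "r * s = W"
proof -
  define A where "A = {i\<in>{1..n}. l i dvd P}"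
  define D where "D = (\<Prod>i\<in>A. l i)"
  define E where "E = (\<Prod>i\<in>{1..n} - A. l i)"
  have A: "A \<subseteq> {1..n}" unfolding A_def by auto
  have DE: "D * E = m" using deng_li_split(1)[OF DL A] unfolding D_def E_def .
  have "\<forall>i\<in>{1..n}. l i > 0" using deng_li_prime(2)[OF DL] by force
  then have "D > 0" "E > 0" unfolding D_def E_def using A by (auto intro!: prod_pos)
  have "D dvd P" unfolding D_def by (rule deng_li_prod_dvd[OF DL A]) (simp add: A_def)
  then obtain P' where P': "P = D * P'" by (rule dvdE)
  have "E dvd Q" unfolding E_def
  proof (rule deng_li_prod_dvd[OF DL])
    fix i assume i: "i \<in> {1..n} - A"
    then have "l i dvd P * Q" using PQ(4) deng_liD(5)[OF DL] by (simp add: dvd_prodI)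
    then show "l i dvd Q" using i deng_li_prime(1)[OF DL] by (auto simp: A_def prime_dvd_mult_iff)
  qed simp
  then obtain Q' where Q': "Q = E * Q'" by (rule dvdE)
  have "m * (P' * Q') = m * W\<^sup>2" using PQ(4) unfolding P' Q' DE[symmetric] by (simp add: ac_simps)
  then have "P' * Q' = W\<^sup>2" using deng_li_m_mod_4_pos(3)[OF DL] by simp
  moreover have "P' > 0" "Q' > 0" using PQ(1,2) \<open>D > 0\<close> \<open>E > 0\<close> P' Q' by (auto simp: zero_less_mult_iff)
  moreover have "coprime P' Q'" using PQ(3) P' Q' by simp
  ultimately obtain r s where "P' = r\<^sup>2" "Q' = s\<^sup>2" "r > 0" "s > 0" "r * s = W"
    using coprime_mult_eq_square_int PQ(5) by metis
  then show ?thesis using that[OF A] P' Q' unfolding D_def E_def by blast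
qed

lemma fund_unit_not_square:
  assumes fu: "fund_unit m x y" and "m > 0" "r > 0" "s > 0" "r\<^sup>2 - m * s\<^sup>2 = 1"
    and x: "x = r\<^sup>2 + m * s\<^sup>2" and y: "y = 2 * r * s"
  shows False
proof -
  define \<eta> where "\<eta> = r + s * sqrt m"
  have "s * sqrt m > 0" using assms(2,4) by simp
  then have "\<eta> > 1" using assms(3) by (simp add: \<eta>_def)
  moreover have "zunit m r s" using assms(5) by (simp add: zunit_def)
  ultimately have "x + y * sqrt m \<le> \<eta>" using fu unfolding fund_unit_def \<eta>_def by blast
  moreover have "\<eta>\<^sup>2 = x + y * sqrt m"
    unfolding \<eta>_def x y using assms(2) by (simp add: power2_eq_square algebra_simps)
  moreover have "\<eta> < \<eta>\<^sup>2" using \<open>\<eta> > 1\<close> by (simp add: power2_eq_square)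
  ultimately show False by simp
qed

lemma deng_li_fund_unit_even:
  assumes DL: "deng_li n l m" and fu: "fund_unit m x y"
  shows "even x"
proof (rule ccontr)
  assume "odd x"
  then obtain k where k: "x = 2 * k + 1" by (rule oddE)
  have norm: "x\<^sup>2 - m * y\<^sup>2 = 1" by (rule deng_li_fund_unit_norm[OF DL fu])
  note pos = deng_li_fund_unit_pos[OF DL fu]
  then have "m * y\<^sup>2 = 4 * (k * (k + 1))" using norm k by (simp add: power2_eq_square algebra_simps)
  then have "even y" using deng_li_m_mod_4_pos(2)[OF DL] by (metis dvd_mult2 even_mult_iff even_numeral power2_eq_square)
  then obtain w where w: "y = 2 * w" by (rule evenE)
  have "(k + 1) * k = m * w\<^sup>2" using norm k w by (simp add: power2_eq_square algebra_simps)
  moreover have "k + 1 > 0" "k > 0" "w > 0" using pos k w by simp_all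
  ultimately obtain A r s where A: "A \<subseteq> {1..n}" "k + 1 = (\<Prod>i\<in>A. l i) * r\<^sup>2"
      "k = (\<Prod>i\<in>{1..n} - A. l i) * s\<^sup>2" "r > 0" "s > 0" "r * s = w"
    using deng_li_factorization[OF DL] coprime_add_one_left by metis
  then have "(\<Prod>i\<in>A. l i) * r\<^sup>2 - (\<Prod>i\<in>{1..n} - A. l i) * s\<^sup>2 = 1 * (if False then 2 else 1)"
    by simp
  then have "A = {} \<or> A = {1..n}" using norm_eq_classification[OF DL A(1)] by blast
  moreover have "(\<Prod>i\<in>A. l i) * (\<Prod>i\<in>{1..n} - A. l i) = m" by (rule deng_li_split(1)[OF DL A(1)])
  ultimately consider "k + 1 = r\<^sup>2" "k = m * s\<^sup>2" | "k + 1 = m * r\<^sup>2" "k = s\<^sup>2"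
    using A(2,3) by fastforce
  then show False
  proof cases
    case 1
    show False
      by (rule fund_unit_not_square[OF fu deng_li_m_mod_4_pos(3)[OF DL] A(4,5)])
        (use 1 k w A(6) in \<open>simp_all add: algebra_simps\<close>)
  next
    case 2
    have "1 \<in> {1..n}" using deng_liD(1)[OF DL] by auto
    then have "l 1 dvd m" using deng_liD(5)[OF DL] by (simp add: dvd_prodI)
    then have "l 1 dvd s\<^sup>2 + 1" using 2 by (metis dvd_mult2)
    then show False
      using prime_3_mod_4_not_dvd_square_plus_one deng_li_prime[OF DL \<open>1 \<in> {1..n}\<close>] by simp
  qed
qed

lemma deng_li_fund_unit_descent:
  assumes DL: "deng_li n l m" and fu: "fund_unit m x y"
  obtains A r s where "A = {2} \<or> A = {1} \<union> {3..n}"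
    "x + 1 = (\<Prod>i\<in>A. l i) * r\<^sup>2" "x - 1 = (\<Prod>i\<in>{1..n} - A. l i) * s\<^sup>2"
    "y = r * s" "r > 0" "s > 0"
proof -
  have "even x" by (rule deng_li_fund_unit_even[OF DL fu])
  then have "coprime 2 (x - 1)" by simp
  then have "coprime (x + 1) (x - 1)"
    using gcd_diff1[of "x + 1" "x - 1"] unfolding coprime_iff_gcd_eq_1 by simp
  moreover have "(x + 1) * (x - 1) = m * y\<^sup>2"
    using deng_li_fund_unit_norm[OF DL fu] by (simp add: power2_eq_square algebra_simps)
  moreover note pos = deng_li_fund_unit_pos[OF DL fu]
  ultimately obtain A r s where A: "A \<subseteq> {1..n}" "x + 1 = (\<Prod>i\<in>A. l i) * r\<^sup>2"
      "x - 1 = (\<Prod>i\<in>{1..n} - A. l i) * s\<^sup>2" "r > 0" "s > 0" "r * s = y"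
    using deng_li_factorization[OF DL, of "x + 1" "x - 1" y] by auto
  then have "(\<Prod>i\<in>A. l i) * r\<^sup>2 - (\<Prod>i\<in>{1..n} - A. l i) * s\<^sup>2 = 1 * (if True then 2 else 1)"
    by simp
  then have "A = {2} \<or> A = {1} \<union> {3..n}" using norm_eq_classification[OF DL A(1)] by blast
  then show ?thesis using that[of A r s] A by simp
qed

lemma deng_li_fund_unit_ram_ideals:
  assumes DL: "deng_li n l m" and fu: "fund_unit m x y"
  obtains A r s where "A = {2} \<or> A = {1} \<union> {3..n}" "r > 0" "s > 0"
    "ram_ideal m l n True A = pideal m ((\<Prod>i\<in>A. l i) * r, s)"
    "ram_ideal m l n True ({1..n} - A) = pideal m ((\<Prod>i\<in>{1..n} - A. l i) * s, r)"
    "(x + 1, y) = zmul m (r, 0) ((\<Prod>i\<in>A. l i) * r, s)"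
    "(x - 1, y) = zmul m (s, 0) ((\<Prod>i\<in>{1..n} - A. l i) * s, r)"
proof -
  obtain A r s where A: "A = {2} \<or> A = {1} \<union> {3..n}"
    and eps: "x + 1 = (\<Prod>i\<in>A. l i) * r\<^sup>2" "x - 1 = (\<Prod>i\<in>{1..n} - A. l i) * s\<^sup>2" "y = r * s"
    and pos: "r > 0" "s > 0"
    by (rule deng_li_fund_unit_descent[OF DL fu])
  define B where "B = {1..n} - A"
  have "A \<subseteq> {1..n}" "B \<subseteq> {1..n}" "{1..n} - B = A"
    using A deng_liD(1)[OF DL] unfolding B_def by auto
  note split_A = deng_li_split[OF DL \<open>A \<subseteq> {1..n}\<close>, folded B_def]
  note split_B = deng_li_split[OF DL \<open>B \<subseteq> {1..n}\<close>, unfolded \<open>{1..n} - B = A\<close>]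
  have eq: "(\<Prod>i\<in>A. l i) * r\<^sup>2 - (\<Prod>i\<in>B. l i) * s\<^sup>2 = 2"
    using eps unfolding B_def by linarith
  have "ramified_ideal m (\<Prod>i\<in>A. l i) True = pideal m ((\<Prod>i\<in>A. l i) * r, s)"
    by (rule ramified_ideal_eq_pideal[OF split_A(1-3), of 1]) (use eq in simp_all)
  moreover have "ramified_ideal m (\<Prod>i\<in>B. l i) True = pideal m ((\<Prod>i\<in>B. l i) * s, r)"
    by (rule ramified_ideal_eq_pideal[OF split_B(1-3), of "-1"]) (use eq in simp_all)
  moreover have "(x + 1, y) = zmul m (r, 0) ((\<Prod>i\<in>A. l i) * r, s)"
    "(x - 1, y) = zmul m (s, 0) ((\<Prod>i\<in>B. l i) * s, r)"
    using eps unfolding B_def by (simp_all add: zmul_def power2_eq_square ac_simps)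
  ultimately show ?thesis
    using that[OF A pos] ram_ideal_eq_ramified_ideal[OF DL] \<open>A \<subseteq> {1..n}\<close> \<open>B \<subseteq> {1..n}\<close>
    unfolding B_def by simp
qed

lemma deng_li_principal_ram_ideal_iff:
  assumes DL: "deng_li n l m" and fu: "fund_unit m x y" and A: "A \<subseteq> {1..n}"
  shows "is_principal m (ram_ideal m l n a0 A) \<longleftrightarrow>
    (\<not> a0 \<and> A = {}) \<or> (\<not> a0 \<and> A = {1..n}) \<or> (a0 \<and> A = {2}) \<or> (a0 \<and> A = {1} \<union> {3..n})"
proof
  assume "is_principal m (ram_ideal m l n a0 A)"
  then obtain U V \<sigma> where "\<sigma> = 1 \<or> \<sigma> = -1"
    "(\<Prod>i\<in>A. l i) * U\<^sup>2 - (\<Prod>i\<in>{1..n} - A. l i) * V\<^sup>2 = \<sigma> * (if a0 then 2 else 1)"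
    unfolding ram_ideal_principal_iff[OF DL A] by blast
  then show "(\<not> a0 \<and> A = {}) \<or> (\<not> a0 \<and> A = {1..n}) \<or> (a0 \<and> A = {2}) \<or> (a0 \<and> A = {1} \<union> {3..n})"
    by (rule norm_eq_classification[OF DL A])
next
  obtain A0 r s where A0: "A0 = {2} \<or> A0 = {1} \<union> {3..n}"
    and "ram_ideal m l n True A0 = pideal m ((\<Prod>i\<in>A0. l i) * r, s)"
      "ram_ideal m l n True ({1..n} - A0) = pideal m ((\<Prod>i\<in>{1..n} - A0. l i) * s, r)"
    by (rule deng_li_fund_unit_ram_ideals[OF DL fu])
  then have "is_principal m (ram_ideal m l n True A0)"
    "is_principal m (ram_ideal m l n True ({1..n} - A0))"
    unfolding is_principal_def by blast+
  moreover have "{1..n} - {2} = {1} \<union> {3..n}" "{1..n} - ({1} \<union> {3..n}) = {2}"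
    using deng_liD(1)[OF DL] by auto
  ultimately have "is_principal m (ram_ideal m l n True {2})"
    "is_principal m (ram_ideal m l n True ({1} \<union> {3..n}))"
    using A0 by (metis Un_insert_left sup_bot.left_neutral)+
  moreover have "is_principal m (ram_ideal m l n False {})"
    unfolding ram_ideal_principal_iff[OF DL empty_subsetI]
    by (rule exI[of _ 1], rule exI[of _ 0], rule exI[of _ 1]) simp
  moreover have "is_principal m (ram_ideal m l n False {1..n})"
    unfolding ram_ideal_principal_iff[OF DL order_refl]
    by (rule exI[of _ 0], rule exI[of _ 1], rule exI[of _ "-1"]) simp
  ultimately show "is_principal m (ram_ideal m l n a0 A)"
    if "(\<not> a0 \<and> A = {}) \<or> (\<not> a0 \<and> A = {1..n}) \<or> (a0 \<and> A = {2}) \<or> (a0 \<and> A = {1} \<union> {3..n})"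
    using that by (elim disjE) simp_all
qed

lemma ram_ideal_all_eq_pideal_sqrt:
  assumes DL: "deng_li n l m"
  shows "ram_ideal m l n False {1..n} = pideal m (0, 1)"
proof -
  have "ramified_ideal m m False = pideal m (m * 0, 1)"
    by (rule ramified_ideal_eq_pideal[where E = 1 and \<sigma> = "-1"]) (use deng_li_m_mod_4_pos(2)[OF DL] in simp_all)
  then show ?thesis using ram_ideal_eq_ramified_ideal[OF DL order_refl] deng_liD(5)[OF DL] by simp
qed

lemma deng_li_fund_unit_shift_ideals:
  assumes DL: "deng_li n l m" and fu: "fund_unit m x y"
  shows "\<exists>s::int. (s = 1 \<or> s = -1) \<and>
    (\<exists>a1 b1. a1 \<noteq> 0 \<and> b1 \<noteq> 0 \<and>
       pideal m (b1 * (x + s), b1 * y) = ideal_prod m (pideal m (a1, 0)) (ram_ideal m l n True {2})) \<and>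
    (\<exists>a2 b2. a2 \<noteq> 0 \<and> b2 \<noteq> 0 \<and>
       pideal m (b2 * (x - s), b2 * y) = ideal_prod m (pideal m (a2, 0)) (ram_ideal m l n True ({1} \<union> {3..n})))"
proof -
  obtain A r s where A: "A = {2} \<or> A = {1} \<union> {3..n}" and pos: "r > 0" "s > 0"
    and "ram_ideal m l n True A = pideal m ((\<Prod>i\<in>A. l i) * r, s)"
      "ram_ideal m l n True ({1..n} - A) = pideal m ((\<Prod>i\<in>{1..n} - A. l i) * s, r)"
      "(x + 1, y) = zmul m (r, 0) ((\<Prod>i\<in>A. l i) * r, s)"
      "(x - 1, y) = zmul m (s, 0) ((\<Prod>i\<in>{1..n} - A. l i) * s, r)"
    by (rule deng_li_fund_unit_ram_ideals[OF DL fu])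
  then have plus: "pideal m (1 * (x + 1), 1 * y) = ideal_prod m (pideal m (r, 0)) (ram_ideal m l n True A)"
    and minus: "pideal m (1 * (x - 1), 1 * y) = ideal_prod m (pideal m (s, 0)) (ram_ideal m l n True ({1..n} - A))"
    by (simp_all add: pideal_zmul)
  have "{1..n} - {2} = {1} \<union> {3..n}" "{1..n} - ({1} \<union> {3..n}) = {2}"
    using deng_liD(1)[OF DL] by auto
  obtain s0 a1 a2 where "s0 = 1 \<or> s0 = -1" "a1 \<noteq> 0" "a2 \<noteq> 0"
    "pideal m (1 * (x + s0), 1 * y) = ideal_prod m (pideal m (a1, 0)) (ram_ideal m l n True {2})"
    "pideal m (1 * (x - s0), 1 * y) = ideal_prod m (pideal m (a2, 0)) (ram_ideal m l n True ({1} \<union> {3..n}))"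
  proof (cases "A = {2}")
    case True
    then show ?thesis
      using that[of 1 r s] plus minus pos \<open>{1..n} - {2} = {1} \<union> {3..n}\<close> by simp
  next
    case False
    then have "A = {1} \<union> {3..n}" using A by blast
    then show ?thesis
      using that[of "-1" s r] plus minus pos \<open>{1..n} - ({1} \<union> {3..n}) = {2}\<close> by simp
  qed
  moreover have "(1::int) \<noteq> 0" by simp
  ultimately show ?thesis by (intro exI[of _ s0, OF conjI] conjI) blast+
qed

text \<open>With \<open>\<epsilon> = x + y\<surd>m\<close>, \<open>\<epsilon> + 1 = r (D r + s\<surd>m)\<close> and \<open>\<surd>m (\<epsilon> - 1) = s E (D r + s\<surd>m)\<close>.\<close>
lemma unit_ratio_eq:
  fixes x y r s D E m :: int
  assumes x: "x + 1 = D * r\<^sup>2" "x - 1 = E * s\<^sup>2" and y: "y = r * s" and m: "D * E = m" "m > 0"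
    and nz: "x + y * sqrt m \<noteq> 1" "E \<noteq> 0" "s \<noteq> 0"
  shows "(x + y * sqrt m + 1) / (x + y * sqrt m - 1) = (r / (s * E)) * sqrt m"
proof -
  have sqrt_m: "sqrt m * sqrt m = D * E" using m by simp
  have "x + y * sqrt m + 1 = r * (D * r + s * sqrt m)"
    using arg_cong[OF x(1), of real_of_int] y by (simp add: algebra_simps power2_eq_square)
  moreover have "sqrt m * (x + y * sqrt m - 1) = s * E * (D * r + s * sqrt m)"
  proof -
    have "sqrt m * (x + y * sqrt m - 1) = sqrt m * (E * s\<^sup>2 + r * s * sqrt m)"
      using arg_cong[OF x(2), of real_of_int] y by (simp add: algebra_simps)
    also have "\<dots> = E * s\<^sup>2 * sqrt m + r * s * (sqrt m * sqrt m)"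
      by (simp add: algebra_simps)
    finally show ?thesis unfolding sqrt_m by (simp add: algebra_simps power2_eq_square)
  qed
  moreover have "sqrt m > 0" using m by simp
  ultimately show ?thesis using nz by (simp add: field_simps)
qed

lemma deng_li_fund_unit_ratio:
  assumes DL: "deng_li n l m" and fu: "fund_unit m x y"
  shows "\<exists>a b :: int. odd a \<and> odd b \<and>
    (x + y * sqrt m + 1) / (x + y * sqrt m - 1) = (a / b) * sqrt m"
proof -
  obtain A r s where A: "A = {2} \<or> A = {1} \<union> {3..n}"
    and eps: "x + 1 = (\<Prod>i\<in>A. l i) * r\<^sup>2" "x - 1 = (\<Prod>i\<in>{1..n} - A. l i) * s\<^sup>2" "y = r * s"
    and pos: "r > 0" "s > 0"
    by (rule deng_li_fund_unit_descent[OF DL fu])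
  have "A \<subseteq> {1..n}" using A deng_liD(1)[OF DL] by auto
  note split = deng_li_split[OF DL this]
  define D where "D = (\<Prod>i\<in>A. l i)"
  define E where "E = (\<Prod>i\<in>{1..n} - A. l i)"
  have eq: "D * r\<^sup>2 - E * s\<^sup>2 = 2" using eps unfolding D_def E_def by linarith
  have "odd r \<and> odd s"
  proof (rule ccontr)
    have "even (D * r\<^sup>2 - E * s\<^sup>2)" using eq by simp
    then have "even r \<longleftrightarrow> even s" using split(2,3) unfolding D_def E_def by simp
    moreover assume "\<not> (odd r \<and> odd s)"
    ultimately obtain a b where "r = 2 * a" "s = 2 * b" by (auto elim!: evenE)
    then have "4 * (D * a\<^sup>2 - E * b\<^sup>2) = 2" using eq by (simp add: algebra_simps power2_eq_square)
    then show False by presburger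
  qed
  moreover have "odd E" using split(3) unfolding E_def .
  then have "odd (s * E)" using calculation by simp
  moreover have "x + y * sqrt m \<noteq> 1" using fu by (simp add: fund_unit_def)
  then have "(x + y * sqrt m + 1) / (x + y * sqrt m - 1) = (r / (s * E)) * sqrt m"
    using \<open>odd E\<close> pos
    by (intro unit_ratio_eq[OF eps[folded D_def E_def] split(1)[folded D_def E_def] deng_li_m_mod_4_pos(3)[OF DL]]) auto
  ultimately show ?thesis by blast
qed

theorem lemma5p2:
  fixes n :: nat and l :: "nat \<Rightarrow> int" and m x y :: int
  assumes DL: "deng_li n l m"
    and eps: "fund_unit m x y"
  shows
    "(\<forall>a0 A. A \<subseteq> {1..n} \<longrightarrow>
        (is_principal m (ram_ideal m l n a0 A) \<longleftrightarrow>
           (\<not> a0 \<and> A = {}) \<or> (\<not> a0 \<and> A = {1..n}) \<or>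
           (a0 \<and> A = {2}) \<or> (a0 \<and> A = {1} \<union> {3..n})))
   \<and> (\<forall>a0 A. A \<subseteq> {1..n} \<and> A \<noteq> {} \<and> A \<noteq> {1..n} \<and>
        is_principal m (ram_ideal m l n a0 A) \<longrightarrow> a0)
   \<and> ram_ideal m l n False {1..n} = pideal m (0, 1)
   \<and> (\<exists>s::int. (s = 1 \<or> s = -1) \<and>
        (\<exists>a1 b1. a1 \<noteq> 0 \<and> b1 \<noteq> 0 \<and>
           pideal m (b1 * (x + s), b1 * y) = ideal_prod m (pideal m (a1, 0)) (ram_ideal m l n True {2})) \<and>
        (\<exists>a2 b2. a2 \<noteq> 0 \<and> b2 \<noteq> 0 \<and>
           pideal m (b2 * (x - s), b2 * y) = ideal_prod m (pideal m (a2, 0)) (ram_ideal m l n True ({1} \<union> {3..n}))))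
   \<and> (\<exists>a b :: int. odd a \<and> odd b \<and>
        (x + y * sqrt (real_of_int m) + 1) / (x + y * sqrt (real_of_int m) - 1)
          = (real_of_int a / real_of_int b) * sqrt (real_of_int m))
   \<and> (\<exists>s0::int. (s0 = 1 \<or> s0 = -1) \<and>
        (\<exists>a b. a \<noteq> 0 \<and> b \<noteq> 0 \<and>
           pideal m (b * (x + s0), b * y) = ideal_prod m (pideal m (a, 0)) (ram_ideal m l n True {2})))"
proof -
  note principal = deng_li_principal_ram_ideal_iff[OF DL eps]
  have "\<forall>a0 A. A \<subseteq> {1..n} \<and> A \<noteq> {} \<and> A \<noteq> {1..n} \<and> is_principal m (ram_ideal m l n a0 A) \<longrightarrow> a0"
  proof (intro allI impI)
    fix a0 A assume "A \<subseteq> {1..n} \<and> A \<noteq> {} \<and> A \<noteq> {1..n} \<and> is_principal m (ram_ideal m l n a0 A)"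
    then show a0 using principal[of A a0] by blast
  qed
  then show ?thesis
    by (intro conjI allI impI)
      (erule principal, blast, rule ram_ideal_all_eq_pideal_sqrt[OF DL],
        rule deng_li_fund_unit_shift_ideals[OF DL eps], rule deng_li_fund_unit_ratio[OF DL eps],
        use deng_li_fund_unit_shift_ideals[OF DL eps] in blast)
qed

end
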